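(* For every integer $l\ge1$, let $\mathcal{I}_6(l)$ be the index coding instance on $[4l+1]$ with $A_{2i-1}=\{2j: j\in[2l]\setminus\{i\}\}\cup\{4l+1\}$ and $A_{2i}=\{2i-1\}$ for $i\in[2l]$, and $A_{4l+1}=\{2i-1: i\in[2l]\}$. Then the UMCD coding scheme is optimal for $\mathcal{I}_6(l)$, i.e. $\beta(\mathcal{I}_6(l))=\beta_{\text{UMCD}}(\mathcal{I}_6(l))$.
   Context: Index coding: messages $x_i\in\mathbb{F}_q^t$; receiver $i$ wants $x_i$ and knows $x_j$, $j\in A_i\subseteq[m]\setminus\{i\}$. A $(t,r)$ index code is an encoder $\phi:\mathbb{F}_q^{mt}\to\mathbb{F}_q^r$ plus decoders $\psi_i$ with $\psi_i(\phi(x),(x_j)_{j\in A_i})=x_i$ for all messages and all $i$; $\beta(\mathcal{I})$ is the infimum of $r/t$ over all $t$ and all such codes (over finite fields). $B_i=[m]\setminus(A_i\cup\{i\})$. For a $0/1$ matrix $\boldsymbol{G}$, $\boldsymbol{G}_{[k]}^L$ is the submatrix of its first $k$ rows and columns $L$; $\mathrm{mcm}$ is the maximum number of $1$-entries in distinct rows and columns (0 if no columns). UMCD algorithm: $N=[m]$, $k=0$; while $N\neq\emptyset$: $k\leftarrow k+1$; pick $w\in N$ minimizing $|A_w|$ over $N$ (arbitrary tie-breaking); row $k$ of $\boldsymbol{G}$ is the indicator of $\{w\}\cup A_w$; remove $w$ from $N$; remove every $i\in N$ with $\mathrm{mcm}(\boldsymbol{G}_{[k]}^{\{i\}\cup B_i})=\mathrm{mcm}(\boldsymbol{G}_{[k]}^{B_i})+1$;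 output $\beta_{\text{UMCD}}=k$. *)

theory Defs
  imports Complex_Main "HOL-Number_Theory.Prime_Powers"
begin

(* An index coding instance on [m] is given by m and the side-information map A
   (receiver i knows x_j for j in A i).  Receivers / messages are indexed 1..m. *)

(* vectors in F_q^t, represented as functions nat => nat with values < q on {0..<t}
   and 0 elsewhere (only the alphabet size of F_q matters for general codes) *)
definition vecs :: "nat \<Rightarrow> nat \<Rightarrow> (nat \<Rightarrow> nat) set" where
  "vecs q t = {v. (\<forall>k<t. v k < q) \<and> (\<forall>k\<ge>t. v k = 0)}"

definition msgs :: "nat \<Rightarrow> nat \<Rightarrow> nat \<Rightarrow> (nat \<Rightarrow> nat \<Rightarrow> nat) set" where
  "msgs q t m = {x. (\<forall>i\<in>{1..m}. x i \<in> vecs q t) \<and> (\<forall>i. i \<notin> {1..m} \<longrightarrow> x i = (\<lambda>_. 0))}"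

definition side_info :: "(nat \<Rightarrow> nat set) \<Rightarrow> nat \<Rightarrow> (nat \<Rightarrow> nat \<Rightarrow> nat) \<Rightarrow> (nat \<Rightarrow> nat \<Rightarrow> nat)" where
  "side_info A i x = (\<lambda>j. if j \<in> A i then x j else (\<lambda>_. 0))"

definition is_index_code ::
  "nat \<Rightarrow> (nat \<Rightarrow> nat set) \<Rightarrow> nat \<Rightarrow> nat \<Rightarrow> nat \<Rightarrow>
     ((nat \<Rightarrow> nat \<Rightarrow> nat) \<Rightarrow> (nat \<Rightarrow> nat)) \<Rightarrow>
     (nat \<Rightarrow> (nat \<Rightarrow> nat) \<Rightarrow> (nat \<Rightarrow> nat \<Rightarrow> nat) \<Rightarrow> (nat \<Rightarrow> nat)) \<Rightarrow> bool" where
  "is_index_code m A q t r phi psi \<longleftrightarrow>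
     (\<forall>x\<in>msgs q t m. phi x \<in> vecs q r) \<and>
     (\<forall>i\<in>{1..m}. \<forall>x\<in>msgs q t m. psi i (phi x) (side_info A i x) = x i)"

definition has_index_code :: "nat \<Rightarrow> (nat \<Rightarrow> nat set) \<Rightarrow> nat \<Rightarrow> nat \<Rightarrow> nat \<Rightarrow> bool" where
  "has_index_code m A q t r \<longleftrightarrow> (\<exists>phi psi. is_index_code m A q t r phi psi)"

definition beta_opt :: "nat \<Rightarrow> (nat \<Rightarrow> nat set) \<Rightarrow> real" where
  "beta_opt m A = Inf {real r / real t | q t r. primepow q \<and> t \<ge> 1 \<and> has_index_code m A q t r}"

definition Bset :: "nat \<Rightarrow> (nat \<Rightarrow> nat set) \<Rightarrow> nat \<Rightarrow> nat set" where
  "Bset m A i = {1..m} - (A i \<union> {i})"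

(* A 0/1 matrix with columns indexed by [m] is a list of rows; row a is the set of
   columns carrying a 1.  mcm rows L = mcm of the submatrix of all these rows and
   columns L: maximum number of 1-entries in distinct rows and distinct columns. *)
definition mcm :: "nat set list \<Rightarrow> nat set \<Rightarrow> nat" where
  "mcm rows L = Max {card M | M. M \<subseteq> {(a, c). a < length rows \<and> c \<in> L \<and> c \<in> rows ! a}
                                 \<and> inj_on fst M \<and> inj_on snd M}"

(* reachable states (N, first k rows of G) of the UMCD algorithm, for any tie-breaking *)
inductive umcd_state :: "nat \<Rightarrow> (nat \<Rightarrow> nat set) \<Rightarrow> nat set \<Rightarrow> nat set list \<Rightarrow> bool"
  for m :: nat and A :: "nat \<Rightarrow> nat set" where
  init: "umcd_state m A {1..m} []"
| step: "umcd_state m A N rows \<Longrightarrow> w \<in> N \<Longrightarrow> (\<forall>v\<in>N. card (A w) \<le> card (A v)) \<Longrightarrow>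
         rows' = rows @ [insert w (A w)] \<Longrightarrow>
         N' = {i \<in> N - {w}. mcm rows' (insert i (Bset m A i)) \<noteq> mcm rows' (Bset m A i) + 1} \<Longrightarrow>
         umcd_state m A N' rows'"

definition umcd_outputs :: "nat \<Rightarrow> (nat \<Rightarrow> nat set) \<Rightarrow> nat set" where
  "umcd_outputs m A = {length rows | rows. umcd_state m A {} rows}"

definition A6 :: "nat \<Rightarrow> nat \<Rightarrow> nat set" where
  "A6 l n = (if n = 4*l+1 then {2*i - 1 | i. i \<in> {1..2*l}}
             else if n \<in> {1..4*l} \<and> odd n then
               {2*j | j. j \<in> {1..2*l} - {(n+1) div 2}} \<union> {4*l+1}
             else if n \<in> {1..4*l} \<and> even n then {n - 1}
             else {})"

end

(*
  While an even receiver 2a remains it minimises |A_w| (|A_2a| = 1, all others have 2l),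
  so UMCD first adds the pairwise disjoint rows {2a-1, 2a}.  These rows never remove a
  receiver: a still uncovered even column and the column 4l+1 meet none of them, and for an
  odd receiver i the pair rows are already matched inside B_i.  Once all 2l pair rows are
  present, the next row {w} u A_w shares with {i} u B_i a column whose removal still leaves
  every pair row meeting {i} u B_i, so the matching number jumps to 2l+1 > |B_i| and all
  remaining receivers are removed: every run stops after 2l+1 rows.

  The binary code transmitting the parities of these 2l+1 rows is decodable.  It is optimal
  because the 2l+1 receivers 2, 4, ..., 4l, 4l+1 know none of each other's messages, so the
  encoder is injective on messages supported there.
*)

theory Submission
  imports Defs "HOL-Number_Theory.Cong"
begin

section \<open>Maximum column matchings\<close>

definition matchings :: "nat set list \<Rightarrow> nat set \<Rightarrow> (nat \<times> nat) set set" where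
  "matchings rows L = {M. M \<subseteq> {(a, c). a < length rows \<and> c \<in> L \<and> c \<in> rows ! a}
                          \<and> inj_on fst M \<and> inj_on snd M}"

lemma mcm_eq_Max_matchings: "mcm rows L = Max (card ` matchings rows L)"
  unfolding mcm_def matchings_def by (rule arg_cong[where f = Max]) auto

lemma finite_matching:
  assumes "M \<in> matchings rows L" shows "finite M"
proof -
  have "fst ` M \<subseteq> {..<length rows}" "inj_on fst M" using assms by (auto simp: matchings_def)
  then show ?thesis by (metis finite_imageD finite_lessThan finite_subset)
qed

lemma card_matching_le_length:
  assumes "M \<in> matchings rows L" shows "card M \<le> length rows"
proof -
  have "inj_on fst M" "fst ` M \<subseteq> {..<length rows}" using assms by (auto simp: matchings_def)
  then show ?thesis by (metis card_image card_lessThan card_mono finite_lessThan)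
qed

lemma card_matching_le_card:
  assumes "finite L" "M \<in> matchings rows L" shows "card M \<le> card L"
proof -
  have "inj_on snd M" "snd ` M \<subseteq> L" using assms(2) by (auto simp: matchings_def)
  then show ?thesis by (metis assms(1) card_image card_mono)
qed

lemma finite_card_matchings: "finite (card ` matchings rows L)"
  by (rule finite_subset[of _ "{..length rows}"]) (auto dest: card_matching_le_length)

lemma card_le_mcm: "M \<in> matchings rows L \<Longrightarrow> card M \<le> mcm rows L"
  unfolding mcm_eq_Max_matchings using finite_card_matchings by (rule Max_ge) simp

lemma mcm_attained:
  obtains M where "M \<in> matchings rows L" "card M = mcm rows L"
proof -
  have "{} \<in> matchings rows L" by (simp add: matchings_def)
  then have "mcm rows L \<in> card ` matchings rows L"
    unfolding mcm_eq_Max_matchings using finite_card_matchings by (intro Max_in) auto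
  then show ?thesis using that by auto
qed

lemma mcm_le_length: "mcm rows L \<le> length rows"
  by (metis mcm_attained card_matching_le_length)

lemma mcm_le_card: "finite L \<Longrightarrow> mcm rows L \<le> card L"
  by (metis mcm_attained card_matching_le_card)

lemma mcm_insert_zero_column:
  assumes "\<And>r. r \<in> set rows \<Longrightarrow> c \<notin> r"
  shows "mcm rows (insert c L) = mcm rows L"
proof -
  have "{(a, x). a < length rows \<and> x \<in> insert c L \<and> x \<in> rows ! a}
      = {(a, x). a < length rows \<and> x \<in> L \<and> x \<in> rows ! a}"
    using assms nth_mem by blast
  then show ?thesis by (simp add: mcm_def)
qed

lemma mcm_insert_le: "mcm rows (insert c L) \<le> mcm rows L + 1"
proof -
  obtain M where M: "M \<in> matchings rows (insert c L)" "card M = mcm rows (insert c L)"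
    by (rule mcm_attained)
  define M\<^sub>c where "M\<^sub>c = {p \<in> M. snd p = c}"
  have "M - M\<^sub>c \<in> matchings rows L"
    using M(1) unfolding matchings_def M\<^sub>c_def by (auto intro: inj_on_subset)
  then have "card (M - M\<^sub>c) \<le> mcm rows L" by (rule card_le_mcm)
  moreover have "card M\<^sub>c \<le> 1"
  proof -
    have "inj_on snd M\<^sub>c" using M(1) unfolding matchings_def M\<^sub>c_def by (auto intro: inj_on_subset)
    then have "card M\<^sub>c = card (snd ` M\<^sub>c)" by (simp add: card_image)
    also have "\<dots> \<le> card {c}" by (rule card_mono) (auto simp: M\<^sub>c_def)
    finally show ?thesis by simp
  qed
  moreover have "card M \<le> card (M - M\<^sub>c) + card M\<^sub>c"
    using card_Un_le[of "M - M\<^sub>c" M\<^sub>c] by (simp add: M\<^sub>c_def Un_absorb2)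
  ultimately show ?thesis using M(2) by linarith
qed

lemma mcm_insert_eq_Suc_if_gt_card:
  assumes "finite L" "card L < mcm rows (insert c L)"
  shows "mcm rows (insert c L) = mcm rows L + 1"
  using assms mcm_le_card[of L rows] mcm_insert_le[of rows c L] by linarith

lemma mcm_disjoint_rows:
  assumes meets: "\<And>a. a < length rows \<Longrightarrow> rows ! a \<inter> L \<noteq> {}"
    and disjoint: "\<And>a b. a < length rows \<Longrightarrow> b < length rows \<Longrightarrow> a \<noteq> b \<Longrightarrow> rows ! a \<inter> rows ! b = {}"
  shows "mcm rows L = length rows"
proof -
  define f where "f a = (SOME c. c \<in> rows ! a \<inter> L)" for a
  have f: "f a \<in> rows ! a \<inter> L" if "a < length rows" for a
    unfolding f_def by (rule someI_ex) (use meets[OF that] in blast)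
  have "inj_on f {..<length rows}"
  proof (rule inj_onI)
    fix a b assume "a \<in> {..<length rows}" "b \<in> {..<length rows}" "f a = f b"
    then show "a = b" using f disjoint by (metis IntD1 disjoint_iff lessThan_iff)
  qed
  define M where "M = (\<lambda>a. (a, f a)) ` {..<length rows}"
  have "M \<subseteq> {(a, c). a < length rows \<and> c \<in> L \<and> c \<in> rows ! a}"
    using f unfolding M_def by auto
  moreover have "inj_on fst M" "inj_on snd M"
    using \<open>inj_on f {..<length rows}\<close> unfolding M_def by (auto simp: inj_on_def)
  ultimately have "M \<in> matchings rows L" by (simp add: matchings_def)
  moreover have "card M = length rows"
    unfolding M_def by (simp add: card_image inj_on_def)
  ultimately show ?thesis using card_le_mcm[of M rows L] mcm_le_length[of rows L] by simp
qed

lemma mcm_append_row: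
  assumes "c \<in> r" "c \<in> L"
  shows "mcm rows (L - {c}) + 1 \<le> mcm (rows @ [r]) L"
proof -
  obtain M where M: "M \<in> matchings rows (L - {c})" "card M = mcm rows (L - {c})"
    by (rule mcm_attained)
  have M_sub: "M \<subseteq> {(a, x). a < length rows \<and> x \<in> L - {c} \<and> x \<in> rows ! a}"
    and "inj_on fst M" "inj_on snd M"
    using M(1) by (auto simp: matchings_def)
  have "length rows \<notin> fst ` M" "c \<notin> snd ` M" using M_sub by auto
  with \<open>inj_on fst M\<close> have "inj_on fst (insert (length rows, c) M)"
    by (auto simp: inj_on_insert)
  moreover from \<open>inj_on snd M\<close> \<open>c \<notin> snd ` M\<close> have "inj_on snd (insert (length rows, c) M)"
    by (auto simp: inj_on_insert)
  moreover have "insert (length rows, c) M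
      \<subseteq> {(a, x). a < length (rows @ [r]) \<and> x \<in> L \<and> x \<in> (rows @ [r]) ! a}"
    using M_sub assms by (auto simp: nth_append)
  ultimately have "insert (length rows, c) M \<in> matchings (rows @ [r]) L"
    by (simp add: matchings_def)
  then have "card (insert (length rows, c) M) \<le> mcm (rows @ [r]) L"
    by (rule card_le_mcm)
  moreover have "(length rows, c) \<notin> M" using M_sub by auto
  then have "card (insert (length rows, c) M) = mcm rows (L - {c}) + 1"
    using finite_matching[OF M(1)] M(2) by simp
  ultimately show ?thesis by simp
qed

lemma umcd_state_subset: "umcd_state m A N rows \<Longrightarrow> N \<subseteq> {1..m}"
  by (induction rule: umcd_state.induct) auto

lemma umcd_state_reaches_empty:
  assumes "umcd_state m A N rows"
  shows "\<exists>rows'. umcd_state m A {} rows'"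
  using assms
proof (induction "card N" arbitrary: N rows rule: less_induct)
  case less
  show ?case
  proof (cases "N = {}")
    case True
    with less.prems show ?thesis by blast
  next
    case False
    then obtain w where w: "w \<in> N" "\<forall>v\<in>N. card (A w) \<le> card (A v)"
      using ex_has_least_nat[of "\<lambda>v. v \<in> N" _ "\<lambda>v. card (A v)"] by blast
    define rows' where "rows' = rows @ [insert w (A w)]"
    define N' where "N' = {i \<in> N - {w}. mcm rows' (insert i (Bset m A i)) \<noteq> mcm rows' (Bset m A i) + 1}"
    have "umcd_state m A N' rows'"
      using less.prems w by (rule umcd_state.step) (simp_all add: rows'_def N'_def)
    moreover have "card N' < card N"
    proof (rule psubset_card_mono)
      show "finite N" using umcd_state_subset[OF less.prems] by (rule finite_subset) simp
      show "N' \<subset> N" using w(1) by (auto simp: N'_def)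
    qed
    ultimately show ?thesis using less.hyps by blast
  qed
qed

section \<open>UMCD on the instance\<close>

lemma receiver_cases [consumes 1, case_names top odd even]:
  fixes i l :: nat
  assumes "i \<in> {1..4*l+1}"
  obtains "i = 4*l+1" | c where "c \<in> {1..2*l}" "i = 2*c - 1" | a where "a \<in> {1..2*l}" "i = 2*a"
proof (cases "even i")
  case True
  then obtain a where "i = 2*a" by blast
  with assms that(3)[of a] show ?thesis by auto
next
  case False
  then obtain c where "i = 2*c + 1" by (blast elim: oddE)
  with assms that(1) that(2)[of "c+1"] show ?thesis by (cases "c = 2*l") auto
qed

lemma A6_top: "A6 l (4*l+1) = (\<lambda>c. 2*c - 1) ` {1..2*l}"
  by (auto simp: A6_def)

lemma A6_odd:
  assumes "c \<in> {1..2*l}"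
  shows "A6 l (2*c - 1) = insert (4*l+1) ((\<lambda>a. 2*a) ` ({1..2*l} - {c}))"
proof -
  have "2*c - 1 \<noteq> 4*l+1" "2*c - 1 \<in> {1..4*l}" "odd (2*c - 1)" "(2*c - 1 + 1) div 2 = c"
    using assms by auto
  then show ?thesis by (auto simp: A6_def)
qed

lemma A6_even: "a \<in> {1..2*l} \<Longrightarrow> A6 l (2*a) = {2*a - 1}"
  by (auto simp: A6_def)

lemma Bset_A6_top: "Bset (4*l+1) (A6 l) (4*l+1) = (\<lambda>a. 2*a) ` {1..2*l}"
proof -
  have "x \<in> (\<lambda>a. 2*a) ` {1..2*l}"
    if "x \<in> {1..4*l+1}" "x \<noteq> 4*l+1" "x \<notin> (\<lambda>c. 2*c - 1) ` {1..2*l}" for x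
    using that(1) by (cases rule: receiver_cases) (use that in auto)
  moreover have "x \<in> {1..4*l+1} \<and> x \<noteq> 4*l+1 \<and> x \<notin> (\<lambda>c. 2*c - 1) ` {1..2*l}"
    if "x \<in> (\<lambda>a. 2*a) ` {1..2*l}" for x
    using that by (auto; presburger)
  ultimately show ?thesis unfolding Bset_def A6_top by blast
qed

lemma Bset_A6_odd:
  assumes "c \<in> {1..2*l}"
  shows "Bset (4*l+1) (A6 l) (2*c - 1) = insert (2*c) ((\<lambda>b. 2*b - 1) ` ({1..2*l} - {c}))"
proof -
  have "x \<in> insert (2*c) ((\<lambda>b. 2*b - 1) ` ({1..2*l} - {c}))"
    if "x \<in> {1..4*l+1}" "x \<notin> A6 l (2*c - 1)" "x \<noteq> 2*c - 1" for x
    using that(1) by (cases rule: receiver_cases) (use that assms A6_odd in auto)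
  moreover have "x \<in> {1..4*l+1} \<and> x \<notin> A6 l (2*c - 1) \<and> x \<noteq> 2*c - 1"
    if "x \<in> insert (2*c) ((\<lambda>b. 2*b - 1) ` ({1..2*l} - {c}))" for x
    using that assms unfolding A6_odd[OF assms] by (auto; presburger)
  ultimately show ?thesis unfolding Bset_def by blast
qed

lemma odd_receiver_cases [consumes 1, case_names top odd]:
  fixes i l :: nat
  assumes "i \<in> {1..4*l+1} - (\<lambda>a. 2*a) ` {1..2*l}"
  obtains "i = 4*l+1" | c where "c \<in> {1..2*l}" "i = 2*c - 1"
proof -
  from assms have "i \<in> {1..4*l+1}" by simp
  then show ?thesis by (cases rule: receiver_cases) (use assms that in auto)
qed

lemma card_A6_odd_receiver:
  assumes "i \<in> {1..4*l+1} - (\<lambda>a. 2*a) ` {1..2*l}"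
  shows "card (A6 l i) = 2*l"
  using assms
proof (cases rule: odd_receiver_cases)
  case top
  have "inj_on (\<lambda>c. 2*c - 1) {1..2*l}" by (auto simp: inj_on_def)
  then show ?thesis unfolding top A6_top by (simp add: card_image)
next
  case (odd c)
  have "inj_on (\<lambda>a. 2*a) ({1..2*l} - {c})" by (auto simp: inj_on_def)
  moreover have "4*l+1 \<notin> (\<lambda>a. 2*a) ` ({1..2*l} - {c})" by (auto; presburger)
  ultimately show ?thesis using odd(1) unfolding odd(2) A6_odd[OF odd(1)] by (simp add: card_image)
qed

lemma card_Bset_A6_odd_receiver:
  assumes "i \<in> {1..4*l+1} - (\<lambda>a. 2*a) ` {1..2*l}"
  shows "card (Bset (4*l+1) (A6 l) i) = 2*l"
  using assms
proof (cases rule: odd_receiver_cases)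
  case top
  have "inj_on (\<lambda>a. 2*a) {1..2*l}" by (auto simp: inj_on_def)
  then show ?thesis unfolding top Bset_A6_top by (simp add: card_image)
next
  case (odd c)
  have "inj_on (\<lambda>b. 2*b - 1) ({1..2*l} - {c})" by (auto simp: inj_on_def)
  moreover have "2*c \<notin> (\<lambda>b. 2*b - 1) ` ({1..2*l} - {c})" by (auto; presburger)
  ultimately show ?thesis using odd(1) unfolding odd(2) Bset_A6_odd[OF odd(1)] by (simp add: card_image)
qed

(* The row {w} u A_w that UMCD adds for the even receiver w = 2a. *)
definition pair_row :: "nat \<Rightarrow> nat set" where
  "pair_row a = {2*a - 1, 2*a}"

lemma mcm_pair_rows:
  assumes "distinct bs" "\<And>b. b \<in> set bs \<Longrightarrow> pair_row b \<inter> L \<noteq> {}"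
  shows "mcm (map pair_row bs) L = length bs"
proof -
  have "pair_row a \<inter> pair_row b = {}" if "a \<noteq> b" for a b
    using that by (auto simp: pair_row_def)
  then have "mcm (map pair_row bs) L = length (map pair_row bs)"
    using assms by (intro mcm_disjoint_rows) (auto simp: nth_eq_iff_index_eq)
  then show ?thesis by simp
qed

lemma pair_rows_keep_receiver:
  assumes bs: "distinct bs" "set bs \<subseteq> {1..2*l}"
    and i: "i \<in> {1..4*l+1}" "i \<notin> (\<lambda>a. 2*a) ` set bs"
  shows "mcm (map pair_row bs) (insert i (Bset (4*l+1) (A6 l) i))
       \<noteq> mcm (map pair_row bs) (Bset (4*l+1) (A6 l) i) + 1"
  using i(1)
proof (cases rule: receiver_cases)
  case top
  have "i \<notin> pair_row b" if "b \<in> set bs" for b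
  proof -
    have "b \<le> 2*l" using that bs(2) by auto
    then show ?thesis using top by (auto simp: pair_row_def)
  qed
  then have "mcm (map pair_row bs) (insert i (Bset (4*l+1) (A6 l) i))
      = mcm (map pair_row bs) (Bset (4*l+1) (A6 l) i)"
    by (intro mcm_insert_zero_column) auto
  then show ?thesis by simp
next
  case (odd c)
  have "mcm (map pair_row bs) (Bset (4*l+1) (A6 l) i) = length bs"
  proof (rule mcm_pair_rows[OF bs(1)])
    fix b assume "b \<in> set bs"
    then show "pair_row b \<inter> Bset (4*l+1) (A6 l) i \<noteq> {}"
      using bs(2) unfolding odd(2) Bset_A6_odd[OF odd(1)] by (cases "b = c") (auto simp: pair_row_def)
  qed
  then show ?thesis
    using mcm_le_length[of "map pair_row bs" "insert i (Bset (4*l+1) (A6 l) i)"] by simp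
next
  case (even a)
  have "i \<notin> pair_row b" if "b \<in> set bs" for b
  proof -
    have "b \<noteq> a" using that i(2) even by auto
    then show ?thesis using even by (auto simp: pair_row_def; presburger)
  qed
  then have "mcm (map pair_row bs) (insert i (Bset (4*l+1) (A6 l) i))
      = mcm (map pair_row bs) (Bset (4*l+1) (A6 l) i)"
    by (intro mcm_insert_zero_column) auto
  then show ?thesis by simp
qed

lemma last_row_shared_column:
  assumes i: "i \<in> {1..4*l+1} - (\<lambda>a. 2*a) ` {1..2*l}"
    and w: "w \<in> {1..4*l+1} - (\<lambda>a. 2*a) ` {1..2*l}" "i \<noteq> w"
  obtains c where "c \<in> insert w (A6 l w)" "c \<in> insert i (Bset (4*l+1) (A6 l) i)"
    "\<And>b. b \<in> {1..2*l} \<Longrightarrow> pair_row b \<inter> (insert i (Bset (4*l+1) (A6 l) i) - {c}) \<noteq> {}"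
  using i
proof (cases rule: odd_receiver_cases)
  case top
  from w obtain d where d: "d \<in> {1..2*l}" "w = 2*d - 1"
    by (cases rule: odd_receiver_cases) (use top in auto)
  show ?thesis
  proof (rule that[of i])
    show "i \<in> insert w (A6 l w)" unfolding top d(2) A6_odd[OF d(1)] by simp
    show "pair_row b \<inter> (insert i (Bset (4*l+1) (A6 l) i) - {i}) \<noteq> {}" if "b \<in> {1..2*l}" for b
      using that unfolding top Bset_A6_top by (auto simp: pair_row_def)
  qed simp
next
  case (odd c)
  note i_odd = odd
  let ?B = "insert (2*c) ((\<lambda>b. 2*b - 1) ` ({1..2*l} - {c}))"
  have B: "insert i (Bset (4*l+1) (A6 l) i) = insert (2*c - 1) ?B"
    unfolding i_odd(2) Bset_A6_odd[OF i_odd(1)] ..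
  from w show ?thesis
  proof (cases rule: odd_receiver_cases)
    case top
    show ?thesis
    proof (rule that[of i])
      show "i \<in> insert w (A6 l w)" using i_odd unfolding top A6_top by simp
      show "pair_row b \<inter> (insert i (Bset (4*l+1) (A6 l) i) - {i}) \<noteq> {}" if "b \<in> {1..2*l}" for b
        using that i_odd(2) unfolding B by (cases "b = c") (auto simp: pair_row_def)
    qed simp
  next
    case (odd d)
    with i_odd w(2) have "c \<noteq> d" by auto
    show ?thesis
    proof (rule that[of "2*c"])
      show "2*c \<in> insert w (A6 l w)"
        using i_odd(1) \<open>c \<noteq> d\<close> unfolding odd(2) A6_odd[OF odd(1)] by simp
      show "2*c \<in> insert i (Bset (4*l+1) (A6 l) i)" unfolding B by simp
      show "pair_row b \<inter> (insert i (Bset (4*l+1) (A6 l) i) - {2*c}) \<noteq> {}" if "b \<in> {1..2*l}" for b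
        using that unfolding B by (cases "b = c") (auto simp: pair_row_def)
    qed
  qed
qed

lemma last_row_removes_receiver:
  assumes bs: "distinct bs" "set bs = {1..2*l}"
    and i: "i \<in> {1..4*l+1} - (\<lambda>a. 2*a) ` {1..2*l}"
    and w: "w \<in> {1..4*l+1} - (\<lambda>a. 2*a) ` {1..2*l}" "i \<noteq> w"
  shows "mcm (map pair_row bs @ [insert w (A6 l w)]) (insert i (Bset (4*l+1) (A6 l) i))
       = mcm (map pair_row bs @ [insert w (A6 l w)]) (Bset (4*l+1) (A6 l) i) + 1"
proof -
  let ?B = "Bset (4*l+1) (A6 l) i"
  obtain c where c: "c \<in> insert w (A6 l w)" "c \<in> insert i ?B"
    and meets: "\<And>b. b \<in> {1..2*l} \<Longrightarrow> pair_row b \<inter> (insert i ?B - {c}) \<noteq> {}"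
    using last_row_shared_column[OF i w] by blast
  have "mcm (map pair_row bs) (insert i ?B - {c}) = length bs"
    using bs meets by (intro mcm_pair_rows) auto
  then have "length bs + 1 \<le> mcm (map pair_row bs @ [insert w (A6 l w)]) (insert i ?B)"
    using mcm_append_row[OF c, of "map pair_row bs"] by simp
  moreover have "length bs = 2*l" using distinct_card[OF bs(1)] bs(2) by simp
  moreover have "card ?B = 2*l" using i by (rule card_Bset_A6_odd_receiver)
  ultimately show ?thesis
    by (intro mcm_insert_eq_Suc_if_gt_card) (simp_all add: Bset_def)
qed

lemma umcd_state_A6_cases:
  assumes "umcd_state (4*l+1) (A6 l) N rows"
  shows "(\<exists>bs. distinct bs \<and> set bs \<subseteq> {1..2*l} \<and> rows = map pair_row bs
              \<and> N = {1..4*l+1} - (\<lambda>a. 2*a) ` set bs)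
         \<or> (N = {} \<and> length rows = 2*l+1)"
  using assms
proof (induction rule: umcd_state.induct)
  case init
  show ?case by (intro disjI1 exI[of _ "[]"]) simp
next
  case (step N rows w rows' N')
  from step.IH step.hyps(2) obtain bs where bs: "distinct bs" "set bs \<subseteq> {1..2*l}"
    and rows: "rows = map pair_row bs" and N: "N = {1..4*l+1} - (\<lambda>a. 2*a) ` set bs"
    by auto
  show ?case
  proof (cases "set bs = {1..2*l}")
    case True
    have "N' = {}"
      using last_row_removes_receiver[OF bs(1) True] step.hyps(2,4,5) unfolding rows N True by auto
    moreover have "length bs = 2*l" using distinct_card[OF bs(1)] True by simp
    ultimately show ?thesis using step.hyps(4) rows by simp
  next
    case False
    then obtain b where b: "b \<in> {1..2*l}" "b \<notin> set bs" using bs(2) by blast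
    then have "2*b \<in> N" using N by auto
    then have "card (A6 l w) \<le> 1" using step.hyps(3) A6_even[OF b(1)] by fastforce
    moreover have "w \<in> {1..4*l+1}" using step.hyps(2) N by simp
    moreover have "l \<ge> 1" using b(1) by (cases l) auto
    ultimately have "w \<in> (\<lambda>a. 2*a) ` {1..2*l}"
      using card_A6_odd_receiver[of w l] by (cases "w \<in> (\<lambda>a. 2*a) ` {1..2*l}") auto
    then obtain a where a: "a \<in> {1..2*l}" "w = 2*a" by blast
    have "a \<notin> set bs" using step.hyps(2) N a by auto
    have rows': "rows' = map pair_row (bs @ [a])"
      using step.hyps(4) unfolding rows a(2) A6_even[OF a(1)] by (simp add: pair_row_def insert_commute)
    have "N' = N - {w}"
      using pair_rows_keep_receiver[of "bs @ [a]" l] bs \<open>a \<notin> set bs\<close> a step.hyps(5)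
      unfolding rows' N by auto
    then have "N' = {1..4*l+1} - (\<lambda>a. 2*a) ` set (bs @ [a])" using N a(2) by auto
    then show ?thesis using rows' bs a \<open>a \<notin> set bs\<close> by (intro disjI1 exI[of _ "bs @ [a]"]) auto
  qed
qed

lemma umcd_outputs_A6: "umcd_outputs (4*l+1) (A6 l) = {2*l+1}"
proof -
  have "length rows = 2*l+1" if "umcd_state (4*l+1) (A6 l) {} rows" for rows
  proof -
    have "1 \<notin> (\<lambda>a. 2*a) ` set bs" for bs :: "nat list" by auto
    then show ?thesis using umcd_state_A6_cases[OF that] by auto
  qed
  moreover obtain rows where "umcd_state (4*l+1) (A6 l) {} rows"
    using umcd_state_reaches_empty[OF umcd_state.init] by blast
  ultimately show ?thesis unfolding umcd_outputs_def by force
qed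

section \<open>Index codes\<close>

lemma has_index_codeI:
  assumes "\<forall>x\<in>msgs q t m. phi x \<in> vecs q r"
    and "\<And>i x x'. i \<in> {1..m} \<Longrightarrow> x \<in> msgs q t m \<Longrightarrow> x' \<in> msgs q t m \<Longrightarrow>
           phi x = phi x' \<Longrightarrow> side_info A i x = side_info A i x' \<Longrightarrow> x i = x' i"
  shows "has_index_code m A q t r"
proof -
  define psi where "psi i y s = (SOME x. x \<in> msgs q t m \<and> phi x = y \<and> side_info A i x = s) i" for i y s
  have "psi i (phi x) (side_info A i x) = x i" if "i \<in> {1..m}" "x \<in> msgs q t m" for i x
  proof -
    let ?x' = "SOME x'. x' \<in> msgs q t m \<and> phi x' = phi x \<and> side_info A i x' = side_info A i x"
    have "?x' \<in> msgs q t m \<and> phi ?x' = phi x \<and> side_info A i ?x' = side_info A i x"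
      by (rule someI[of _ x]) (use that in simp)
    then have "?x' i = x i" using assms(2)[OF that(1) _ that(2)] by blast
    then show ?thesis unfolding psi_def .
  qed
  then show ?thesis using assms(1) unfolding has_index_code_def is_index_code_def by blast
qed

lemma card_funs_const_outside:
  assumes "finite S" "finite V"
  shows "card {x. \<forall>i. (i \<in> S \<longrightarrow> x i \<in> V) \<and> (i \<notin> S \<longrightarrow> x i = z)} = card V ^ card S"
proof -
  have "bij_betw (\<lambda>x. restrict x S) {x. \<forall>i. (i \<in> S \<longrightarrow> x i \<in> V) \<and> (i \<notin> S \<longrightarrow> x i = z)} (S \<rightarrow>\<^sub>E V)"
    by (rule bij_betw_byWitness[where f' = "\<lambda>f i. if i \<in> S then f i else z"])
      (auto simp: fun_eq_iff PiE_def extensional_def)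
  then show ?thesis using assms by (simp add: bij_betw_same_card card_funcsetE)
qed

lemma vecs_eq: "vecs q t = {v. \<forall>k. (k \<in> {..<t} \<longrightarrow> v k \<in> {..<q}) \<and> (k \<notin> {..<t} \<longrightarrow> v k = 0)}"
  unfolding vecs_def by (rule Collect_cong) (meson lessThan_iff not_less)

lemma finite_vecs: "finite (vecs q t)"
  unfolding vecs_eq by (rule finite_set_of_finite_funs) simp_all

lemma card_vecs: "card (vecs q t) = q ^ t"
  unfolding vecs_eq by (subst card_funs_const_outside) simp_all

lemma index_code_independent_set_bound:
  assumes code: "is_index_code m A q t r phi psi" and "q \<ge> 2"
    and S: "S \<subseteq> {1..m}" and independent: "\<And>i. i \<in> S \<Longrightarrow> A i \<inter> S = {}"
  shows "card S * t \<le> r"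
proof -
  define X where "X = {x. \<forall>i. (i \<in> S \<longrightarrow> x i \<in> vecs q t) \<and> (i \<notin> S \<longrightarrow> x i = (\<lambda>_. 0))}"
  have "(\<lambda>_. 0) \<in> vecs q t" using \<open>q \<ge> 2\<close> by (simp add: vecs_def)
  then have X_msgs: "X \<subseteq> msgs q t m" using S unfolding X_def msgs_def by auto metis
  have decode: "x i = psi i (phi x) (\<lambda>_ _. 0)" if "i \<in> S" "x \<in> X" for i x
  proof -
    have "side_info A i x = (\<lambda>_ _. 0)"
      using independent[OF that(1)] that(2) by (auto simp: side_info_def X_def fun_eq_iff)
    have "x \<in> msgs q t m" "i \<in> {1..m}" using X_msgs S that by auto
    then have "psi i (phi x) (side_info A i x) = x i"
      using code unfolding is_index_code_def by blast
    with \<open>side_info A i x = (\<lambda>_ _. 0)\<close> show ?thesis by simp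
  qed
  have "inj_on phi X"
  proof (rule inj_onI)
    fix x y assume xy: "x \<in> X" "y \<in> X" "phi x = phi y"
    show "x = y"
    proof
      fix i show "x i = y i"
        using xy decode[of i x] decode[of i y] by (cases "i \<in> S") (simp_all add: X_def)
    qed
  qed
  moreover have "phi ` X \<subseteq> vecs q r" using code X_msgs unfolding is_index_code_def by auto
  ultimately have "card X \<le> card (vecs q r)"
    by (rule card_inj_on_le[OF _ _ finite_vecs])
  moreover have "card X = q ^ (card S * t)"
    using card_funs_const_outside[OF finite_subset[OF S finite_atLeastAtMost] finite_vecs, where z = "\<lambda>_. 0"]
    by (simp add: X_def card_vecs power_mult mult.commute)
  ultimately have "q ^ (card S * t) \<le> q ^ r" by (simp add: card_vecs)
  then show ?thesis using \<open>q \<ge> 2\<close> by simp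
qed

section \<open>The value of \<beta> for the instance\<close>

lemma index_code_A6_length_ge:
  assumes "is_index_code (4*l+1) (A6 l) q t r phi psi" "q \<ge> 2"
  shows "(2*l+1) * t \<le> r"
proof -
  define S where "S = insert (4*l+1) ((\<lambda>a. 2*a) ` {1..2*l})"
  have "card S = 2*l+1"
  proof -
    have "inj_on (\<lambda>a. 2*a) {1..2*l}" by (auto simp: inj_on_def)
    moreover have "4*l+1 \<notin> (\<lambda>a. 2*a) ` {1..2*l}" by (auto; presburger)
    ultimately show ?thesis by (simp add: S_def card_image)
  qed
  moreover have "S \<subseteq> {1..4*l+1}" by (auto simp: S_def)
  moreover have "A6 l i \<inter> S = {}" if "i \<in> S" for i
  proof (cases "i = 4*l+1")
    case True
    then show ?thesis unfolding True A6_top S_def by (auto; presburger)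
  next
    case False
    with that obtain a where a: "a \<in> {1..2*l}" "i = 2*a" by (auto simp: S_def)
    then show ?thesis unfolding a(2) A6_even[OF a(1)] S_def by (auto; presburger)
  qed
  ultimately show ?thesis using index_code_independent_set_bound[OF assms] by metis
qed

lemma cong_add_cancel_nat:
  fixes u v u' v' :: nat
  assumes "[u + v = u' + v'] (mod n)" "[v = v'] (mod n)"
  shows "[u = u'] (mod n)"
proof -
  have "[u' + v' = u' + v] (mod n)" using assms(2) by (simp add: cong_add_lcancel_nat cong_sym)
  with assms(1) have "[u + v = u' + v] (mod n)" by (rule cong_trans)
  then show ?thesis by (simp add: cong_add_rcancel_nat)
qed

(* The parities of the rows of a UMCD matrix: coordinate 0 is the row {4l+1} u A_(4l+1),
   coordinate a in [2l] is the row {2a-1, 2a}. *)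
definition A6_encoder :: "nat \<Rightarrow> (nat \<Rightarrow> nat \<Rightarrow> nat) \<Rightarrow> nat \<Rightarrow> nat" where
  "A6_encoder l x k =
     (if k = 0 then (x (4*l+1) 0 + (\<Sum>c\<in>{1..2*l}. x (2*c - 1) 0)) mod 2
      else if k \<le> 2*l then (x (2*k - 1) 0 + x (2*k) 0) mod 2
      else 0)"

lemma A6_encoder_decodes:
  assumes i: "i \<in> {1..4*l+1}"
    and enc: "A6_encoder l x = A6_encoder l x'"
    and side: "side_info (A6 l) i x = side_info (A6 l) i x'"
  shows "[x i 0 = x' i 0] (mod 2)"
proof -
  define b where "b j = x j 0" for j
  define b' where "b' j = x' j 0" for j
  have known: "b j = b' j" if "j \<in> A6 l i" for j
    using fun_cong[OF side, of j] that by (simp add: side_info_def b_def b'_def)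
  have pair: "[b (2*a - 1) + b (2*a) = b' (2*a - 1) + b' (2*a)] (mod 2)" if "a \<in> {1..2*l}" for a
    using fun_cong[OF enc, of a] that by (simp add: A6_encoder_def cong_def b_def b'_def)
  have top_row: "[b (4*l+1) + (\<Sum>c\<in>{1..2*l}. b (2*c - 1))
      = b' (4*l+1) + (\<Sum>c\<in>{1..2*l}. b' (2*c - 1))] (mod 2)"
    using fun_cong[OF enc, of 0] by (simp add: A6_encoder_def cong_def b_def b'_def)
  have "[b i = b' i] (mod 2)"
    using i
  proof (cases rule: receiver_cases)
    case top
    have "(\<Sum>c\<in>{1..2*l}. b (2*c - 1)) = (\<Sum>c\<in>{1..2*l}. b' (2*c - 1))"
      using known unfolding top A6_top by (intro sum.cong) auto
    then show ?thesis using top_row unfolding top by (simp add: cong_add_rcancel_nat)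
  next
    case (odd c)
    have known_odd: "[b (2*a - 1) = b' (2*a - 1)] (mod 2)" if "a \<in> {1..2*l} - {c}" for a
      using pair[of a] known[of "2*a"] that
      unfolding odd(2) A6_odd[OF odd(1)] by (simp add: cong_add_cancel_nat)
    have "[b (4*l+1) + (b (2*c - 1) + (\<Sum>a\<in>{1..2*l} - {c}. b (2*a - 1)))
         = b (4*l+1) + (b' (2*c - 1) + (\<Sum>a\<in>{1..2*l} - {c}. b' (2*a - 1)))] (mod 2)"
      using top_row known[of "4*l+1"] odd(1)
      unfolding odd(2) A6_odd[OF odd(1)] by (simp add: sum.remove[of _ c])
    then have "[b (2*c - 1) + (\<Sum>a\<in>{1..2*l} - {c}. b (2*a - 1))
         = b' (2*c - 1) + (\<Sum>a\<in>{1..2*l} - {c}. b' (2*a - 1))] (mod 2)"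
      by (simp add: cong_add_lcancel_nat)
    moreover have "[(\<Sum>a\<in>{1..2*l} - {c}. b (2*a - 1)) = (\<Sum>a\<in>{1..2*l} - {c}. b' (2*a - 1))] (mod 2)"
      using known_odd by (rule cong_sum)
    ultimately show ?thesis unfolding odd(2) by (rule cong_add_cancel_nat)
  next
    case (even a)
    then show ?thesis
      using pair[of a] known[of "2*a - 1"] by (simp add: A6_even cong_add_lcancel_nat)
  qed
  then show ?thesis by (simp add: b_def b'_def)
qed

lemma has_index_code_A6: "has_index_code (4*l+1) (A6 l) 2 1 (2*l+1)"
proof (rule has_index_codeI)
  show "\<forall>x\<in>msgs 2 1 (4*l+1). A6_encoder l x \<in> vecs 2 (2*l+1)"
    by (auto simp: A6_encoder_def vecs_def)
next
  fix i x x'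
  assume i: "i \<in> {1..4*l+1}" and msgs: "x \<in> msgs 2 1 (4*l+1)" "x' \<in> msgs 2 1 (4*l+1)"
    and enc: "A6_encoder l x = A6_encoder l x'"
    and side: "side_info (A6 l) i x = side_info (A6 l) i x'"
  have "[x i 0 = x' i 0] (mod 2)" using i enc side by (rule A6_encoder_decodes)
  moreover have "x i 0 < 2" "x' i 0 < 2" using msgs i by (auto simp: msgs_def vecs_def)
  ultimately have "x i 0 = x' i 0" by (simp add: cong_def)
  moreover have "x i k = 0" "x' i k = 0" if "k \<noteq> 0" for k
    using msgs i that by (auto simp: msgs_def vecs_def)
  ultimately show "x i = x' i" by (metis ext)
qed

lemma beta_opt_A6: "beta_opt (4*l+1) (A6 l) = real (2*l+1)"
  unfolding beta_opt_def
proof (rule cInf_eq_minimum)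
  show "real (2*l+1) \<in> {real r / real t |q t r. primepow q \<and> 1 \<le> t \<and> has_index_code (4*l+1) (A6 l) q t r}"
    using has_index_code_A6 by force
next
  fix z assume "z \<in> {real r / real t |q t r. primepow q \<and> 1 \<le> t \<and> has_index_code (4*l+1) (A6 l) q t r}"
  then obtain q t r phi psi where z: "z = real r / real t" "primepow q" "t \<ge> 1"
    and code: "is_index_code (4*l+1) (A6 l) q t r phi psi"
    unfolding has_index_code_def by blast
  have "q \<ge> 2" using primepow_gt_Suc_0[OF z(2)] by simp
  with code have "(2*l+1) * t \<le> r" by (rule index_code_A6_length_ge)
  then have "real (2*l+1) * real t \<le> real r" by (simp only: of_nat_mult [symmetric] of_nat_le_iff)
  then show "real (2*l+1) \<le> z" using z(1,3) by (simp add: pos_le_divide_eq)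
qed

theorem proposition10:
  fixes l :: nat
  assumes "l \<ge> 1"
  shows "umcd_outputs (4*l+1) (A6 l) \<noteq> {} \<and>
         (\<forall>k \<in> umcd_outputs (4*l+1) (A6 l). beta_opt (4*l+1) (A6 l) = real k)"
  unfolding umcd_outputs_A6 beta_opt_A6 by simp

end
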